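(* Let $(V,\mathcal{E})$ be a forward or backward neutral genealogy model. For $n<m$ let $p_{n,m}$ be the probability that two distinct vertices of $V_m$, chosen uniformly at random (independently of $\mathcal{E}$), have a common ancestor in $V_n$. Then $$p_{n,m}=1-\prod_{j=n}^{m-1}(1-s_j).$$ In particular $m\mapsto p_{n,m}$ is non-decreasing, and if $s_j<1$ for all $j$ then $p_{n,\infty}:=\lim_{m\to\infty}p_{n,m}=1$ for every $n$ if and only if $\sum_js_j=\infty$.
   Context: Data: $\tau\in\mathbb{N}\cup\{\infty\}$, positive integers $(X_n)_{n<\tau}$, vectors $k_n=(k_n(i))_{i=1}^{X_n}$ of nonnegative integers with $\sum_ik_n(i)=X_{n+1}\ge 2$. $V_n=\{(n,i):1\le i\le X_n\}$. A genealogy model is a random edge set $\mathcal{E}\subset\bigcup_nV_n\times V_{n+1}$ such that each vertex of $V_{n+1}$ has exactly one parent in $V_n$ and the out-degrees in $V_n$ are a permutation of $k_n$. $\mathcal{E}_n=\mathcal{E}\cap(V_n\times V_{n+1})$, $K_n=(\mathrm{od}((n,i)))_i$, $\Xi_n$ = partition of $V_{n+1}$ into sibling sets. Forward neutral: for all $n$, $K_n$ exchangeable and independent of $(\mathcal{E}_m)_{m<n}$. Backward neutral: for all $n$, $\Xi_n$ exchangeable and independent of $(\mathcal{E}_m)_{m>n}$. Coalescent time scale increments: $s_n=\sum_i\frac{k_n(i)(k_n(i)-1)}{X_{n+1}(X_{n+1}-1)}$. *)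

theory Defs
  imports "HOL-Probability.Probability" "HOL-Combinatorics.Permutations"
begin

(* Encoding: generations n with enat n < tau; vertex (n,i), 1 <= i <= X n.
   The random edge set is encoded by the random parent maps
   E n w :: nat => nat,  E n w j = index of the parent in V_n of vertex (n+1, j)
   (defined as 0 outside {1..X (n+1)}).  E_n of the paper is the graph of E n w. *)

definition genealogy_data :: "enat \<Rightarrow> (nat \<Rightarrow> nat) \<Rightarrow> (nat \<Rightarrow> nat \<Rightarrow> nat) \<Rightarrow> bool" where
  "genealogy_data \<tau> X k \<longleftrightarrow>
     (\<forall>n. enat n < \<tau> \<longrightarrow> X n \<ge> 1) \<and>
     (\<forall>n. enat (Suc n) < \<tau> \<longrightarrow> (\<Sum>i=1..X n. k n i) = X (Suc n) \<and> X (Suc n) \<ge> 2)"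

definition outdeg :: "(nat \<Rightarrow> 'a \<Rightarrow> nat \<Rightarrow> nat) \<Rightarrow> 'a \<Rightarrow> (nat \<Rightarrow> nat) \<Rightarrow> nat \<Rightarrow> nat \<Rightarrow> nat" where
  "outdeg E w X n = (\<lambda>i. if i \<in> {1..X n} then card {j \<in> {1..X (Suc n)}. E n w j = i} else 0)"

definition sibpart :: "(nat \<Rightarrow> 'a \<Rightarrow> nat \<Rightarrow> nat) \<Rightarrow> 'a \<Rightarrow> (nat \<Rightarrow> nat) \<Rightarrow> nat \<Rightarrow> nat set set" where
  "sibpart E w X n = {{j \<in> {1..X (Suc n)}. E n w j = i} | i. i \<in> {1..X n}} - {{}}"

(* independence of two random variables with possibly different value types
   (the library's indep_var requires equal types); this is indep_var unfolded *)
definition indep_rv :: "'a measure \<Rightarrow> 'b measure \<Rightarrow> ('a \<Rightarrow> 'b) \<Rightarrow> 'c measure \<Rightarrow> ('a \<Rightarrow> 'c) \<Rightarrow> bool" where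
  "indep_rv M Ma A Mb B \<longleftrightarrow>
     A \<in> measurable M Ma \<and> B \<in> measurable M Mb \<and>
     prob_space.indep_set M {A -` S \<inter> space M | S. S \<in> sets Ma} {B -` S \<inter> space M | S. S \<in> sets Mb}"

definition genealogy_model ::
  "'a measure \<Rightarrow> enat \<Rightarrow> (nat \<Rightarrow> nat) \<Rightarrow> (nat \<Rightarrow> nat \<Rightarrow> nat) \<Rightarrow> (nat \<Rightarrow> 'a \<Rightarrow> nat \<Rightarrow> nat) \<Rightarrow> bool" where
  "genealogy_model M \<tau> X k E \<longleftrightarrow> prob_space M \<and>
     (\<forall>n. enat (Suc n) < \<tau> \<longrightarrow>
        E n \<in> measurable M (count_space UNIV) \<and>
        (\<forall>w \<in> space M.
           (\<forall>j \<in> {1..X (Suc n)}. E n w j \<in> {1..X n}) \<and>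
           (\<forall>j. j \<notin> {1..X (Suc n)} \<longrightarrow> E n w j = 0) \<and>
           (\<exists>\<sigma>. \<sigma> permutes {1..X n} \<and> (\<forall>i \<in> {1..X n}. outdeg E w X n i = k n (\<sigma> i)))))"

definition forward_neutral ::
  "'a measure \<Rightarrow> enat \<Rightarrow> (nat \<Rightarrow> nat) \<Rightarrow> (nat \<Rightarrow> 'a \<Rightarrow> nat \<Rightarrow> nat) \<Rightarrow> bool" where
  "forward_neutral M \<tau> X E \<longleftrightarrow>
     (\<forall>n. enat (Suc n) < \<tau> \<longrightarrow>
        (\<forall>\<sigma>. \<sigma> permutes {1..X n} \<longrightarrow>
           distr M (count_space UNIV) (\<lambda>w. outdeg E w X n \<circ> \<sigma>)
             = distr M (count_space UNIV) (\<lambda>w. outdeg E w X n)) \<and>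
        indep_rv M (count_space UNIV) (\<lambda>w. outdeg E w X n)
           (PiM {..<n} (\<lambda>_. count_space (UNIV :: (nat \<Rightarrow> nat) set))) (\<lambda>w. \<lambda>m\<in>{..<n}. E m w))"

definition backward_neutral ::
  "'a measure \<Rightarrow> enat \<Rightarrow> (nat \<Rightarrow> nat) \<Rightarrow> (nat \<Rightarrow> 'a \<Rightarrow> nat \<Rightarrow> nat) \<Rightarrow> bool" where
  "backward_neutral M \<tau> X E \<longleftrightarrow>
     (\<forall>n. enat (Suc n) < \<tau> \<longrightarrow>
        (\<forall>\<sigma>. \<sigma> permutes {1..X (Suc n)} \<longrightarrow>
           distr M (count_space UNIV) (\<lambda>w. (\<lambda>B. \<sigma> ` B) ` sibpart E w X n)
             = distr M (count_space UNIV) (\<lambda>w. sibpart E w X n)) \<and>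
        indep_rv M (count_space UNIV) (\<lambda>w. sibpart E w X n)
           (PiM {m. n < m \<and> enat (Suc m) < \<tau>} (\<lambda>_. count_space (UNIV :: (nat \<Rightarrow> nat) set)))
           (\<lambda>w. \<lambda>m\<in>{m. n < m \<and> enat (Suc m) < \<tau>}. E m w))"

definition coal_incr :: "(nat \<Rightarrow> nat \<Rightarrow> nat) \<Rightarrow> (nat \<Rightarrow> nat) \<Rightarrow> nat \<Rightarrow> real" where
  "coal_incr k X n = (\<Sum>i=1..X n. real (k n i) * (real (k n i) - 1))
                      / (real (X (Suc n)) * (real (X (Suc n)) - 1))"

(* anc E w n d j = index of the ancestor in V_n of vertex (n+d, j) *)
fun anc :: "(nat \<Rightarrow> 'a \<Rightarrow> nat \<Rightarrow> nat) \<Rightarrow> 'a \<Rightarrow> nat \<Rightarrow> nat \<Rightarrow> nat \<Rightarrow> nat" where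
  "anc E w n 0 j = j"
| "anc E w n (Suc d) j = E n w (anc E w (Suc n) d j)"

(* p_{n,m}: two distinct vertices of V_m chosen uniformly (independently of the genealogy)
   have a common ancestor in V_n; averaged over the uniform ordered pair *)
definition coal_prob :: "'a measure \<Rightarrow> (nat \<Rightarrow> nat) \<Rightarrow> (nat \<Rightarrow> 'a \<Rightarrow> nat \<Rightarrow> nat) \<Rightarrow> nat \<Rightarrow> nat \<Rightarrow> real" where
  "coal_prob M X E n m =
     (\<Sum>i\<in>{1..X m}. \<Sum>j\<in>{1..X m} - {i}.
         measure M {w \<in> space M. anc E w n (m - n) i = anc E w n (m - n) j})
     / (real (X m) * (real (X m) - 1))"

end

(*
  Call two distinct vertices of V_m separated in V_n if their ancestors in V_n differ, and let
  R(n,m) = expected_separated n m be the expected number of separated ordered pairs, so that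
  p_{n,m} = 1 - R(n,m) / (X_m (X_m - 1)).  It suffices to show
  R(n,m) = X_m (X_m - 1) \<Prod>_{j=n}^{m-1} (1 - s_j).

  Grouping the vertices of V_{m+1} by their parents, the number of ordered pairs of distinct
  vertices of V_{m+1} with distinct parents is \<Sum>_{a\<noteq>b} K_m(a) K_m(b) = X_{m+1} (X_{m+1} - 1) (1 - s_m),
  because K_m is a permutation of k_m.

  Forward neutrality: R(n,m+1) = \<Sum>_{a\<noteq>b} E[K_m(a) K_m(b)] P(a, b separated in V_n), since K_m is
  independent of the earlier edges; by exchangeability E[K_m(a) K_m(b)] is the same for all a \<noteq> b,
  which gives R(n,m+1) = (1 - s_m) X_{m+1} (X_{m+1} - 1) R(n,m) / (X_m (X_m - 1)).

  Backward neutrality: if the ancestors a \<noteq> b in V_{n+1} of two vertices are known, the vertices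
  are separated in V_n iff a and b have different parents.  This event is independent of the
  later edges and, by exchangeability of \<Xi>_n, has probability 1 - s_n; hence
  P(separated in V_n) = (1 - s_n) P(separated in V_{n+1}).

  Finally \<Prod>_{j\<ge>n} (1 - s_j) = 0 for all n iff \<Sum> s_j = \<infinity>: the product is at most exp(-\<Sum> s_j) and,
  by Weierstrass' product inequality, at least 1 - \<Sum> s_j.
*)

theory Submission
  imports Defs
begin

lemma sum_comp_eq_sum_card_fibres:
  fixes g :: "'b \<Rightarrow> 'c::comm_semiring_1"
  assumes "finite S" "finite T" "e ` S \<subseteq> T"
  shows "(\<Sum>x\<in>S. g (e x)) = (\<Sum>y\<in>T. of_nat (card {x\<in>S. e x = y}) * g y)"
proof -
  have "(\<Sum>x\<in>S. g (e x)) = (\<Sum>y\<in>T. \<Sum>x\<in>{x\<in>S. e x = y}. g (e x))"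
    using sum.group[OF assms, of "\<lambda>x. g (e x)"] by simp
  also have "\<dots> = (\<Sum>y\<in>T. of_nat (card {x\<in>S. e x = y}) * g y)"
    by (intro sum.cong refl) simp
  finally show ?thesis .
qed

lemma sum_offdiag_eq_sum_all:
  fixes f :: "'b \<Rightarrow> 'b \<Rightarrow> 'c::comm_monoid_add"
  assumes "finite S" "\<And>a. a \<in> S \<Longrightarrow> f a a = 0"
  shows "(\<Sum>a\<in>S. \<Sum>b\<in>S-{a}. f a b) = (\<Sum>a\<in>S. \<Sum>b\<in>S. f a b)"
proof (rule sum.cong[OF refl])
  fix a assume "a \<in> S"
  then show "(\<Sum>b\<in>S-{a}. f a b) = (\<Sum>b\<in>S. f a b)"
    using assms by (simp add: sum.remove)
qed

lemma sum_offdiag_comp_fibres: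
  fixes F :: "'b \<Rightarrow> 'b \<Rightarrow> 'c::comm_semiring_1"
  assumes "finite S" "finite T" "e ` S \<subseteq> T" "\<And>a. a \<in> T \<Longrightarrow> F a a = 0"
  shows "(\<Sum>i\<in>S. \<Sum>j\<in>S-{i}. F (e i) (e j))
       = (\<Sum>a\<in>T. \<Sum>b\<in>T-{a}. of_nat (card {x\<in>S. e x = a}) * of_nat (card {x\<in>S. e x = b}) * F a b)"
proof -
  let ?c = "\<lambda>a. of_nat (card {x\<in>S. e x = a}) :: 'c"
  have "(\<Sum>i\<in>S. \<Sum>j\<in>S-{i}. F (e i) (e j)) = (\<Sum>i\<in>S. \<Sum>j\<in>S. F (e i) (e j))"
    using assms by (intro sum_offdiag_eq_sum_all) auto
  also have "\<dots> = (\<Sum>i\<in>S. \<Sum>b\<in>T. ?c b * F (e i) b)"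
    using assms by (intro sum.cong refl sum_comp_eq_sum_card_fibres)
  also have "\<dots> = (\<Sum>a\<in>T. ?c a * (\<Sum>b\<in>T. ?c b * F a b))"
    using assms by (intro sum_comp_eq_sum_card_fibres[where g = "\<lambda>a. \<Sum>b\<in>T. ?c b * F a b"])
  also have "\<dots> = (\<Sum>a\<in>T. \<Sum>b\<in>T. ?c a * ?c b * F a b)"
    by (simp add: sum_distrib_left mult.assoc)
  also have "\<dots> = (\<Sum>a\<in>T. \<Sum>b\<in>T-{a}. ?c a * ?c b * F a b)"
    using assms by (intro sum_offdiag_eq_sum_all[symmetric]) auto
  finally show ?thesis .
qed

lemma sum_offdiag_const:
  fixes c :: "'c::comm_ring_1"
  assumes "finite S" "\<And>a b. a \<in> S \<Longrightarrow> b \<in> S \<Longrightarrow> a \<noteq> b \<Longrightarrow> f a b = c"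
  shows "(\<Sum>a\<in>S. \<Sum>b\<in>S-{a}. f a b) = c * of_nat (card S) * (of_nat (card S) - 1)"
proof -
  have "(\<Sum>a\<in>S. \<Sum>b\<in>S-{a}. f a b) = (\<Sum>a\<in>S. c * (of_nat (card S) - 1))"
  proof (intro sum.cong refl)
    fix a assume "a \<in> S"
    then have "card S \<ge> 1" using assms(1) by (metis One_nat_def Suc_leI card_gt_0_iff empty_iff)
    have "(\<Sum>b\<in>S-{a}. f a b) = (\<Sum>b\<in>S-{a}. c)"
      using assms \<open>a \<in> S\<close> by (intro sum.cong) auto
    with \<open>a \<in> S\<close> \<open>card S \<ge> 1\<close> show "(\<Sum>b\<in>S-{a}. f a b) = c * (of_nat (card S) - 1)"
      using assms by (simp add: card_Diff_singleton of_nat_diff mult.commute)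
  qed
  then show ?thesis by (simp add: mult.commute mult.left_commute)
qed

lemma sum_offdiag_mult:
  fixes f :: "'b \<Rightarrow> 'c::comm_ring_1"
  assumes "finite S"
  shows "(\<Sum>a\<in>S. \<Sum>b\<in>S-{a}. f a * f b) = sum f S * (sum f S - 1) - (\<Sum>a\<in>S. f a * (f a - 1))"
proof -
  have "(\<Sum>a\<in>S. \<Sum>b\<in>S-{a}. f a * f b) = (\<Sum>a\<in>S. f a * (sum f S - f a))"
    using assms by (intro sum.cong refl) (simp add: sum_diff1 sum_distrib_left[symmetric])
  then show ?thesis
    by (simp add: algebra_simps sum_subtractf sum_distrib_left sum_distrib_right power2_eq_square)
qed

lemma sum_offdiag_delta:
  assumes "finite S" "x \<in> S" "y \<in> S"
  shows "(\<Sum>a\<in>S. \<Sum>b\<in>S-{a}. if a = x \<and> b = y then h a b else 0) = (if x \<noteq> y then h x y else 0)"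
proof -
  have "(\<Sum>b\<in>S-{a}. if a = x \<and> b = y then h a b else 0) = (if a = x \<and> x \<noteq> y then h x y else 0)"
    if "a \<in> S" for a
    using assms by (cases "a = x") (simp_all add: sum.delta' cong: if_cong)
  then show ?thesis using assms by (simp add: sum.delta' cong: sum.cong)
qed

lemma permutes_invariant_offdiag_const:
  assumes "\<And>\<sigma> a b. \<sigma> permutes S \<Longrightarrow> a \<in> S \<Longrightarrow> b \<in> S \<Longrightarrow> f (\<sigma> a) (\<sigma> b) = f a b"
  shows "\<exists>c. \<forall>a\<in>S. \<forall>b\<in>S. a \<noteq> b \<longrightarrow> f a b = c"
proof (cases "\<exists>a0\<in>S. \<exists>b0\<in>S. a0 \<noteq> b0")
  case True
  then obtain a0 b0 where ab0: "a0 \<in> S" "b0 \<in> S" "a0 \<noteq> b0" by blast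
  have "f a b = f a0 b0" if ab: "a \<in> S" "b \<in> S" "a \<noteq> b" for a b
  proof -
    \<comment> \<open>first move \<open>a0\<close> to \<open>a\<close>, then the new position of \<open>b0\<close> to \<open>b\<close>\<close>
    define \<sigma> where
      "\<sigma> = Transposition.transpose (Transposition.transpose a0 a b0) b \<circ> Transposition.transpose a0 a"
    have "\<sigma> permutes S"
      unfolding \<sigma>_def using ab ab0
      by (intro permutes_compose permutes_swap_id) (auto simp: Transposition.transpose_def)
    moreover have "\<sigma> a0 = a" "\<sigma> b0 = b"
      unfolding \<sigma>_def using ab ab0 by (auto simp: Transposition.transpose_def)
    ultimately show ?thesis using assms ab0 by metis
  qed
  then show ?thesis by blast
qed blast

lemma prod_one_minus_antimono:
  fixes s :: "nat \<Rightarrow> real"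
  assumes "m \<le> m'" "\<And>j. j < m' \<Longrightarrow> 0 \<le> s j \<and> s j \<le> 1"
  shows "(\<Prod>j\<in>{n..<m'}. 1 - s j) \<le> (\<Prod>j\<in>{n..<m}. 1 - s j)"
proof (cases "n \<le> m")
  case True
  have "(\<Prod>j\<in>{n..<m'}. 1 - s j) = (\<Prod>j\<in>{n..<m}. 1 - s j) * (\<Prod>j\<in>{m..<m'}. 1 - s j)"
    using True assms(1) by (simp add: prod.atLeastLessThan_concat)
  also have "\<dots> \<le> (\<Prod>j\<in>{n..<m}. 1 - s j)"
    using assms by (intro mult_left_le prod_le_1 prod_nonneg) auto
  finally show ?thesis .
next
  case False
  then show ?thesis using assms by (auto intro!: prod_le_1)
qed

lemma not_summable_tail_sums_at_top:
  fixes s :: "nat \<Rightarrow> real"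
  assumes "\<not> summable s" "\<And>j. 0 \<le> s j"
  shows "filterlim (\<lambda>m. \<Sum>j\<in>{n..<m}. s j) at_top sequentially"
proof (subst filterlim_at_top, intro allI)
  fix Z
  obtain N where N: "Z + (\<Sum>j<n. s j) < (\<Sum>j<N. s j)"
    using assms summableI_nonneg_bounded[of s] by (meson not_le)
  show "eventually (\<lambda>m. Z \<le> (\<Sum>j\<in>{n..<m}. s j)) sequentially"
  proof (rule eventually_sequentiallyI[of "max N n"])
    fix m assume m: "max N n \<le> m"
    have "(\<Sum>j<N. s j) \<le> (\<Sum>j<m. s j)"
      using m assms(2) by (intro sum_mono2) auto
    also have "\<dots> = (\<Sum>j<n. s j) + (\<Sum>j\<in>{n..<m}. s j)"
      using m by (simp add: lessThan_atLeast0 sum.atLeastLessThan_concat)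
    finally show "Z \<le> (\<Sum>j\<in>{n..<m}. s j)" using N by linarith
  qed
qed

lemma not_summable_imp_prod_one_minus_tendsto_0:
  fixes s :: "nat \<Rightarrow> real"
  assumes "\<not> summable s" "\<And>j. 0 \<le> s j \<and> s j \<le> 1"
  shows "(\<lambda>m. \<Prod>j\<in>{n..<m}. 1 - s j) \<longlonglongrightarrow> 0"
proof (rule tendsto_sandwich)
  show "\<forall>\<^sub>F m in sequentially. 0 \<le> (\<Prod>j\<in>{n..<m}. 1 - s j)"
    using assms by (intro always_eventually allI prod_nonneg) auto
  have "(\<Prod>j\<in>{n..<m}. 1 - s j) \<le> (\<Prod>j\<in>{n..<m}. exp (- s j))" for m
    using assms by (intro prod_mono) (auto simp: exp_minus_ge)
  then show "\<forall>\<^sub>F m in sequentially. (\<Prod>j\<in>{n..<m}. 1 - s j) \<le> exp (- (\<Sum>j\<in>{n..<m}. s j))"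
    by (simp add: exp_sum[symmetric] sum_negf)
  show "(\<lambda>m. exp (- (\<Sum>j\<in>{n..<m}. s j))) \<longlonglongrightarrow> 0"
    using filterlim_compose[OF exp_at_bot filterlim_compose[OF filterlim_uminus_at_bot_at_top
        not_summable_tail_sums_at_top[OF assms(1)]]] assms
    by (simp add: o_def)
qed simp

lemma summable_imp_prod_one_minus_bounded_below:
  fixes s :: "nat \<Rightarrow> real"
  assumes "summable s" "\<And>j. 0 \<le> s j \<and> s j \<le> 1"
  obtains n where "\<And>m. 1/2 \<le> (\<Prod>j\<in>{n..<m}. 1 - s j)"
proof -
  obtain n where "\<forall>n'\<ge>n. norm (\<Sum>j. s (j + n')) < 1/2"
    using suminf_exist_split[OF _ assms(1), of "1/2"] by auto
  then have n: "(\<Sum>j. s (j + n)) < 1/2" by auto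
  have "1/2 \<le> (\<Prod>j\<in>{n..<m}. 1 - s j)" for m
  proof -
    have "(\<Sum>j\<in>{n..<m}. s j) = (\<Sum>j<m-n. s (j + n))"
      by (simp add: sum.atLeastLessThan_shift_0 atLeast0LessThan add.commute)
    also have "\<dots> \<le> (\<Sum>j. s (j + n))"
      using assms by (intro sum_le_suminf) (auto simp: summable_iff_shift)
    finally show ?thesis
      using n Weierstrass_prod_ineq[of "{n..<m}" s] assms(2) by fastforce
  qed
  then show ?thesis using that by blast
qed

lemma prod_one_minus_tendsto_0_iff_not_summable:
  fixes s :: "nat \<Rightarrow> real"
  assumes "\<And>j. 0 \<le> s j \<and> s j \<le> 1"
  shows "(\<forall>n. (\<lambda>m. \<Prod>j\<in>{n..<m}. 1 - s j) \<longlonglongrightarrow> 0) \<longleftrightarrow> \<not> summable s"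
proof
  assume lim: "\<forall>n. (\<lambda>m. \<Prod>j\<in>{n..<m}. 1 - s j) \<longlonglongrightarrow> 0"
  show "\<not> summable s"
  proof
    assume "summable s"
    then obtain n where "\<And>m. 1/2 \<le> (\<Prod>j\<in>{n..<m}. 1 - s j)"
      using summable_imp_prod_one_minus_bounded_below assms by blast
    moreover have "(\<lambda>m. \<Prod>j\<in>{n..<m}. 1 - s j) \<longlonglongrightarrow> 0" using lim by blast
    ultimately have "1/2 \<le> (0::real)" by (intro LIMSEQ_le_const) auto
    then show False by simp
  qed
qed (use not_summable_imp_prod_one_minus_tendsto_0 assms in blast)

lemma tendsto_one_minus_iff: "((\<lambda>m. 1 - p m) \<longlongrightarrow> (1::real)) F \<longleftrightarrow> (p \<longlongrightarrow> 0) F"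
  using tendsto_add_const_iff[of 1 "\<lambda>m. - p m" 0 F] tendsto_minus_cancel_left[of p 0 F] by simp

lemma anc_Suc_parent: "anc E w n (Suc d) j = anc E w n d (E (n + d) w j)"
  by (induction d arbitrary: n) auto

lemma anc_restrict:
  "(\<And>j. n \<le> j \<Longrightarrow> j < n + d \<Longrightarrow> j \<in> I) \<Longrightarrow> anc (\<lambda>j F. F j) (\<lambda>j\<in>I. E j w) n d a = anc E w n d a"
  by (induction d arbitrary: n) auto

lemma measurable_anc:
  assumes "\<And>j. n \<le> j \<Longrightarrow> j < n + d \<Longrightarrow> E j \<in> measurable N (count_space UNIV)"
  shows "(\<lambda>w. anc E w n d i) \<in> measurable N (count_space UNIV)"
  using assms
proof (induction d arbitrary: n)
  case (Suc d)
  have g: "(\<lambda>w. anc E w (Suc n) d i) \<in> measurable N (count_space UNIV)"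
    using Suc.prems by (intro Suc.IH) auto
  have "E n \<in> measurable N (count_space UNIV)"
    using Suc.prems by simp
  then have f: "(\<lambda>w. E n w x) \<in> measurable N (count_space UNIV)" for x
    by (rule measurable_compose) simp
  show ?case
    using measurable_compose_countable[where f = "\<lambda>x w. E n w x", OF f g] by simp
qed simp

lemma sets_Collect_eq_countable:
  fixes f g :: "'a \<Rightarrow> 'b::countable"
  assumes "f \<in> measurable N (count_space UNIV)" "g \<in> measurable N (count_space UNIV)"
  shows "{w \<in> space N. f w = g w} \<in> sets N"
proof -
  have "{w \<in> space N. f w = g w} = (\<Union>v. (f -` {v} \<inter> space N) \<inter> (g -` {v} \<inter> space N))"
    by auto
  also have "\<dots> \<in> sets N"
    using assms by (intro sets.countable_UN) (auto intro: measurable_sets)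
  finally show ?thesis .
qed

lemma sum_offdiag_mult_eq_coal_incr:
  fixes f :: "nat \<Rightarrow> real"
  assumes "genealogy_data \<tau> X k" "enat (Suc j) < \<tau>"
    and "(\<Sum>a=1..X j. f a) = real (X (Suc j))"
    and "(\<Sum>a=1..X j. f a * (f a - 1)) = (\<Sum>a=1..X j. real (k j a) * (real (k j a) - 1))"
  shows "(\<Sum>a\<in>{1..X j}. \<Sum>b\<in>{1..X j}-{a}. f a * f b)
       = real (X (Suc j)) * (real (X (Suc j)) - 1) * (1 - coal_incr k X j)"
proof -
  have "X (Suc j) \<ge> 2" using assms(1,2) unfolding genealogy_data_def by blast
  then have "real (X (Suc j)) * (real (X (Suc j)) - 1) \<noteq> 0" by simp
  then show ?thesis
    using assms(3,4) by (simp add: sum_offdiag_mult coal_incr_def field_simps)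
qed

lemma coal_incr_bounds:
  assumes "genealogy_data \<tau> X k" "enat (Suc j) < \<tau>"
  shows "0 \<le> coal_incr k X j \<and> coal_incr k X j \<le> 1"
proof -
  have "X (Suc j) \<ge> 2" and ksum: "(\<Sum>i=1..X j. k j i) = X (Suc j)"
    using assms unfolding genealogy_data_def by blast+
  then have pos: "real (X (Suc j)) * (real (X (Suc j)) - 1) > 0" by simp
  have "0 \<le> (\<Sum>a\<in>{1..X j}. \<Sum>b\<in>{1..X j}-{a}. real (k j a) * real (k j b))"
    by (intro sum_nonneg) simp
  also have "\<dots> = real (X (Suc j)) * (real (X (Suc j)) - 1) * (1 - coal_incr k X j)"
    using assms ksum by (intro sum_offdiag_mult_eq_coal_incr) (simp_all flip: of_nat_sum)
  finally have le_1: "coal_incr k X j \<le> 1"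
    using pos by (simp add: zero_le_mult_iff)
  have "0 \<le> real c * (real c - 1)" for c :: nat
    by (cases c) auto
  then have "0 \<le> (\<Sum>i=1..X j. real (k j i) * (real (k j i) - 1))"
    by (intro sum_nonneg)
  with le_1 show ?thesis
    using pos unfolding coal_incr_def by simp
qed

lemma (in prob_space) integrable_indicator_event:
  "A \<in> events \<Longrightarrow> integrable M (indicator A :: 'a \<Rightarrow> real)"
  by (simp add: less_top[symmetric])

lemma (in prob_space) indep_rv_prob_Int:
  assumes "indep_rv M Ma A Mb B" "S \<in> sets Ma" "T \<in> sets Mb"
  shows "prob ((A -` S \<inter> space M) \<inter> (B -` T \<inter> space M))
       = prob (A -` S \<inter> space M) * prob (B -` T \<inter> space M)"
  using assms unfolding indep_rv_def by (intro indep_setD) auto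

lemma (in prob_space) indep_rv_integral_mult_indicator:
  fixes f :: "'b \<Rightarrow> real"
  assumes indep: "indep_rv M (count_space UNIV) K Mb Y" and T: "T \<in> sets Mb"
    and fin: "finite ((\<lambda>w. f (K w)) ` space M)"
  shows "(\<integral>w. f (K w) * indicator (Y -` T \<inter> space M) w \<partial>M)
       = expectation (\<lambda>w. f (K w)) * prob (Y -` T \<inter> space M)"
proof -
  define R where "R = (\<lambda>w. f (K w)) ` space M"
  define C where "C = Y -` T \<inter> space M"
  define A where "A v = K -` {x. f x = v} \<inter> space M" for v
  have "K \<in> measurable M (count_space UNIV)" "Y \<in> measurable M Mb"
    using indep unfolding indep_rv_def by auto
  then have events: "C \<in> events" "A v \<in> events" for v
    unfolding C_def A_def using T by (auto intro: measurable_sets)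
  have level_sets: "f (K w) = (\<Sum>v\<in>R. v * indicator (A v) w)" if "w \<in> space M" for w
  proof -
    have "(\<Sum>v\<in>R. v * indicator (A v) w) = (\<Sum>v\<in>R. if v = f (K w) then v else 0)"
      using that by (intro sum.cong) (auto simp: A_def indicator_def)
    also have "\<dots> = f (K w)"
      using that fin by (simp add: R_def sum.delta)
    finally show ?thesis by simp
  qed
  have "(\<integral>w. f (K w) * indicator C w \<partial>M) = (\<integral>w. (\<Sum>v\<in>R. v * indicator (A v \<inter> C) w) \<partial>M)"
    by (intro Bochner_Integration.integral_cong refl)
       (simp add: level_sets sum_distrib_right indicator_inter_arith mult.assoc)
  also have "\<dots> = (\<Sum>v\<in>R. v * prob (A v \<inter> C))"
    using events by (simp add: integrable_indicator_event Int_absorb2 sets.sets_into_space)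
  also have "\<dots> = (\<Sum>v\<in>R. v * prob (A v)) * prob C"
    using indep_rv_prob_Int[OF indep, of "{x. f x = v}" T for v] T
    by (simp add: A_def C_def sum_distrib_right mult.assoc)
  also have "(\<Sum>v\<in>R. v * prob (A v)) = (\<integral>w. (\<Sum>v\<in>R. v * indicator (A v) w) \<partial>M)"
    using events by (simp add: integrable_indicator_event Int_absorb2 sets.sets_into_space)
  also have "\<dots> = expectation (\<lambda>w. f (K w))"
    by (intro Bochner_Integration.integral_cong refl) (simp add: level_sets)
  finally show ?thesis unfolding C_def .
qed

lemma (in prob_space) prob_offdiag_pair_decompose:
  assumes V: "finite V" and U: "\<And>w. w \<in> space M \<Longrightarrow> U w \<in> V" "\<And>w. w \<in> space M \<Longrightarrow> U' w \<in> V"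
    and events: "\<And>a b. {w \<in> space M. U w = a \<and> U' w = b} \<in> events" "\<And>a b. F a b \<in> events"
  shows "prob {w \<in> space M. U w \<noteq> U' w \<and> w \<in> F (U w) (U' w)}
       = (\<Sum>a\<in>V. \<Sum>b\<in>V-{a}. prob ({w \<in> space M. U w = a \<and> U' w = b} \<inter> F a b))"
proof -
  let ?G = "\<lambda>a b. {w \<in> space M. U w = a \<and> U' w = b}"
  have "indicator {w \<in> space M. U w \<noteq> U' w \<and> w \<in> F (U w) (U' w)} w
      = (\<Sum>a\<in>V. \<Sum>b\<in>V-{a}. indicator (?G a b \<inter> F a b) w :: real)" if "w \<in> space M" for w
  proof -
    have "(\<Sum>a\<in>V. \<Sum>b\<in>V-{a}. indicator (?G a b \<inter> F a b) w :: real)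
        = (\<Sum>a\<in>V. \<Sum>b\<in>V-{a}. if a = U w \<and> b = U' w then indicator (F a b) w else 0)"
      using that by (intro sum.cong refl) (auto simp: indicator_def)
    also have "\<dots> = (if U w \<noteq> U' w then indicator (F (U w) (U' w)) w else 0)"
      using that U by (intro sum_offdiag_delta[OF V])
    finally show ?thesis
      using that by (simp add: indicator_def)
  qed
  then have "(\<integral>w. indicator {w \<in> space M. U w \<noteq> U' w \<and> w \<in> F (U w) (U' w)} w \<partial>M :: real)
      = (\<integral>w. (\<Sum>a\<in>V. \<Sum>b\<in>V-{a}. indicator (?G a b \<inter> F a b) w) \<partial>M)"
    by (intro Bochner_Integration.integral_cong refl)
  moreover have "{w \<in> space M. U w \<noteq> U' w \<and> w \<in> F (U w) (U' w)} \<inter> space M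
      = {w \<in> space M. U w \<noteq> U' w \<and> w \<in> F (U w) (U' w)}"
    by blast
  ultimately have "prob {w \<in> space M. U w \<noteq> U' w \<and> w \<in> F (U w) (U' w)}
      = (\<integral>w. (\<Sum>a\<in>V. \<Sum>b\<in>V-{a}. indicator (?G a b \<inter> F a b) w) \<partial>M)"
    by simp
  also have "\<dots> = (\<Sum>a\<in>V. \<Sum>b\<in>V-{a}. prob (?G a b \<inter> F a b))"
    using events by (simp add: integrable_indicator_event sets.Int Int_absorb2 sets.sets_into_space)
  finally show ?thesis .
qed

lemma enat_le_less_trans: "j \<le> m \<Longrightarrow> enat m < \<tau> \<Longrightarrow> enat j < \<tau>"
  by (meson enat_ord_simps(1) order_le_less_trans)

lemma outdeg_le: "outdeg E w X m a \<le> X (Suc m)"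
proof -
  have "card {j\<in>{1..X (Suc m)}. E m w j = a} \<le> card {1..X (Suc m)}"
    by (intro card_mono) auto
  then show ?thesis unfolding outdeg_def by auto
qed

locale genealogy =
  fixes M :: "'a measure" and \<tau> :: enat and X :: "nat \<Rightarrow> nat"
    and k :: "nat \<Rightarrow> nat \<Rightarrow> nat" and E :: "nat \<Rightarrow> 'a \<Rightarrow> nat \<Rightarrow> nat"
  assumes data: "genealogy_data \<tau> X k"
    and model: "genealogy_model M \<tau> X k E"
begin

sublocale prob_space M
  using model unfolding genealogy_model_def by blast

lemma parent_measurable: "enat (Suc n) < \<tau> \<Longrightarrow> E n \<in> measurable M (count_space UNIV)"
  using model unfolding genealogy_model_def by blast

lemma parent_in_range:
  "enat (Suc n) < \<tau> \<Longrightarrow> w \<in> space M \<Longrightarrow> j \<in> {1..X (Suc n)} \<Longrightarrow> E n w j \<in> {1..X n}"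
  using model unfolding genealogy_model_def by blast

lemma outdeg_permutes_k:
  "enat (Suc n) < \<tau> \<Longrightarrow> w \<in> space M \<Longrightarrow>
   \<exists>\<sigma>. \<sigma> permutes {1..X n} \<and> (\<forall>i\<in>{1..X n}. outdeg E w X n i = k n (\<sigma> i))"
  using model unfolding genealogy_model_def by blast

lemma X_Suc_ge_2: "enat (Suc n) < \<tau> \<Longrightarrow> X (Suc n) \<ge> 2"
  using data unfolding genealogy_data_def by blast

lemma anc_in_range:
  "enat (n + d) < \<tau> \<Longrightarrow> w \<in> space M \<Longrightarrow> i \<in> {1..X (n + d)} \<Longrightarrow> anc E w n d i \<in> {1..X n}"
proof (induction d arbitrary: n)
  case (Suc d)
  have "enat (Suc n) < \<tau>"
    using Suc.prems(1) by (rule enat_le_less_trans[rotated]) simp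
  moreover have "anc E w (Suc n) d i \<in> {1..X (Suc n)}"
    using Suc by (intro Suc.IH) auto
  ultimately show ?case
    using Suc.prems parent_in_range by simp
qed simp

lemma anc_measurable: "enat (n + d) < \<tau> \<Longrightarrow> (\<lambda>w. anc E w n d i) \<in> measurable M (count_space UNIV)"
  by (intro measurable_anc parent_measurable) (auto elim: enat_le_less_trans[rotated])

lemma ancestor_pair_event:
  assumes "enat (n + d) < \<tau>"
  shows "{w \<in> space M. anc E w n d i = a \<and> anc E w n d j = b} \<in> events"
proof -
  have "{w \<in> space M. anc E w n d i = a \<and> anc E w n d j = b}
      = ((\<lambda>w. anc E w n d i) -` {a} \<inter> space M) \<inter> ((\<lambda>w. anc E w n d j) -` {b} \<inter> space M)"
    by auto
  then show ?thesis
    using measurable_sets[OF anc_measurable[OF assms]] by simp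
qed

definition separated :: "nat \<Rightarrow> nat \<Rightarrow> nat \<Rightarrow> nat \<Rightarrow> 'a set" where
  "separated n m i j = {w \<in> space M. anc E w n (m - n) i \<noteq> anc E w n (m - n) j}"

definition expected_separated :: "nat \<Rightarrow> nat \<Rightarrow> real" where
  "expected_separated n m = (\<Sum>i\<in>{1..X m}. \<Sum>j\<in>{1..X m} - {i}. prob (separated n m i j))"

lemma separated_event:
  assumes "n \<le> m" "enat m < \<tau>"
  shows "separated n m i j \<in> events"
proof -
  have "{w \<in> space M. anc E w n (m - n) i = anc E w n (m - n) j} \<in> events"
    using assms by (intro sets_Collect_eq_countable anc_measurable) simp_all
  moreover have "separated n m i j = space M - {w \<in> space M. anc E w n (m - n) i = anc E w n (m - n) j}"
    unfolding separated_def by auto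
  ultimately show ?thesis by auto
qed

lemma separated_Suc_self: "separated n (Suc n) a b = {w \<in> space M. E n w a \<noteq> E n w b}"
  by (simp add: separated_def)

lemma parent_eq_iff_siblings:
  assumes "enat (Suc n) < \<tau>" "w \<in> space M" "a \<in> {1..X (Suc n)}" "b \<in> {1..X (Suc n)}"
  shows "E n w a = E n w b \<longleftrightarrow> (\<exists>B\<in>sibpart E w X n. a \<in> B \<and> b \<in> B)"
proof
  assume eq: "E n w a = E n w b"
  let ?B = "{j \<in> {1..X (Suc n)}. E n w j = E n w a}"
  have "E n w a \<in> {1..X n}"
    using assms parent_in_range by blast
  moreover have "a \<in> ?B" "b \<in> ?B"
    using assms eq by simp_all
  ultimately have "?B \<in> sibpart E w X n"
    unfolding sibpart_def by (intro DiffI CollectI exI[of _ "E n w a"]) auto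
  with \<open>a \<in> ?B\<close> \<open>b \<in> ?B\<close> show "\<exists>B\<in>sibpart E w X n. a \<in> B \<and> b \<in> B"
    by (intro bexI[of _ ?B] conjI)
next
  assume "\<exists>B\<in>sibpart E w X n. a \<in> B \<and> b \<in> B"
  then show "E n w a = E n w b"
    unfolding sibpart_def by auto
qed

lemma coal_prob_eq_expected_separated:
  assumes "n \<le> m" "enat m < \<tau>"
  shows "coal_prob M X E n m
       = (real (X m) * (real (X m) - 1) - expected_separated n m) / (real (X m) * (real (X m) - 1))"
proof -
  have "measure M {w \<in> space M. anc E w n (m - n) i = anc E w n (m - n) j} = 1 - prob (separated n m i j)"
    for i j
  proof -
    have "{w \<in> space M. anc E w n (m - n) i = anc E w n (m - n) j} = space M - separated n m i j"
      unfolding separated_def by auto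
    then show ?thesis using separated_event[OF assms] by (simp add: prob_compl)
  qed
  moreover have "(\<Sum>i\<in>{1..X m}. \<Sum>j\<in>{1..X m} - {i}. 1::real) = real (X m) * (real (X m) - 1)"
    using sum_offdiag_const[of "{1..X m}" "\<lambda>_ _. 1::real" 1] by simp
  ultimately show ?thesis
    unfolding coal_prob_def expected_separated_def by (simp add: sum_subtractf)
qed

lemma expected_separated_refl: "expected_separated n n = real (X n) * (real (X n) - 1)"
proof -
  have "prob (separated n n i j) = 1" if "i \<noteq> j" for i j
    using that by (simp add: separated_def prob_space)
  then show ?thesis
    unfolding expected_separated_def using sum_offdiag_const[of "{1..X n}" _ 1] by simp
qed

lemma expected_separated_eq_integral:
  assumes "n \<le> m" "enat m < \<tau>"
  shows "expected_separated n m
       = (\<integral>w. (\<Sum>i\<in>{1..X m}. \<Sum>j\<in>{1..X m} - {i}. indicator (separated n m i j) w) \<partial>M)"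
  using separated_event[OF assms]
  by (simp add: expected_separated_def integrable_indicator_event Int_absorb2 sets.sets_into_space)

lemma sum_outdeg:
  assumes "enat (Suc m) < \<tau>" "w \<in> space M"
  shows "(\<Sum>a=1..X m. real (outdeg E w X m a)) = real (X (Suc m))"
proof -
  have "real (X (Suc m)) = (\<Sum>j\<in>{1..X (Suc m)}. (\<lambda>_. 1::real) (E m w j))"
    by simp
  also have "\<dots> = (\<Sum>a\<in>{1..X m}. real (card {j\<in>{1..X (Suc m)}. E m w j = a}) * 1)"
    using parent_in_range[OF assms] by (intro sum_comp_eq_sum_card_fibres) auto
  also have "\<dots> = (\<Sum>a=1..X m. real (outdeg E w X m a))"
    by (intro sum.cong refl) (simp add: outdeg_def)
  finally show ?thesis ..
qed

lemma sum_outdeg_pairs: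
  assumes "enat (Suc m) < \<tau>" "w \<in> space M"
  shows "(\<Sum>a=1..X m. real (outdeg E w X m a) * (real (outdeg E w X m a) - 1))
       = (\<Sum>a=1..X m. real (k m a) * (real (k m a) - 1))"
proof -
  obtain \<sigma> where \<sigma>: "\<sigma> permutes {1..X m}" "\<forall>i\<in>{1..X m}. outdeg E w X m i = k m (\<sigma> i)"
    using outdeg_permutes_k[OF assms] by blast
  have "(\<Sum>a=1..X m. real (outdeg E w X m a) * (real (outdeg E w X m a) - 1))
      = (\<Sum>a=1..X m. (\<lambda>i. real (k m i) * (real (k m i) - 1)) (\<sigma> a))"
    using \<sigma>(2) by (intro sum.cong refl) simp
  also have "\<dots> = (\<Sum>a=1..X m. real (k m a) * (real (k m a) - 1))"
    by (rule sum.reindex_bij_betw[OF permutes_imp_bij[OF \<sigma>(1)]])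
  finally show ?thesis .
qed

lemma sum_offdiag_outdeg:
  assumes "enat (Suc m) < \<tau>" "w \<in> space M"
  shows "(\<Sum>a\<in>{1..X m}. \<Sum>b\<in>{1..X m}-{a}. real (outdeg E w X m a) * real (outdeg E w X m b))
       = real (X (Suc m)) * (real (X (Suc m)) - 1) * (1 - coal_incr k X m)"
  using assms by (intro sum_offdiag_mult_eq_coal_incr[OF data] sum_outdeg sum_outdeg_pairs)

lemma sum_offdiag_indicator_separated_Suc:
  assumes "n \<le> m" "enat (Suc m) < \<tau>" "w \<in> space M"
  shows "(\<Sum>i\<in>{1..X (Suc m)}. \<Sum>j\<in>{1..X (Suc m)}-{i}. indicator (separated n (Suc m) i j) w)
       = (\<Sum>a\<in>{1..X m}. \<Sum>b\<in>{1..X m}-{a}.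
            real (outdeg E w X m a) * real (outdeg E w X m b) * indicator (separated n m a b) w :: real)"
proof -
  have "indicator (separated n (Suc m) i j) w = (indicator (separated n m (E m w i) (E m w j)) w :: real)"
    for i j
  proof -
    have "anc E w n (Suc m - n) x = anc E w n (m - n) (E m w x)" for x
      using anc_Suc_parent[of E w n "m - n" x] assms(1) by (simp add: Suc_diff_le del: anc.simps)
    then show ?thesis by (simp add: separated_def indicator_def)
  qed
  then have "(\<Sum>i\<in>{1..X (Suc m)}. \<Sum>j\<in>{1..X (Suc m)}-{i}. indicator (separated n (Suc m) i j) w)
      = (\<Sum>i\<in>{1..X (Suc m)}. \<Sum>j\<in>{1..X (Suc m)}-{i}.
           (\<lambda>a b. indicator (separated n m a b) w :: real) (E m w i) (E m w j))"
    by simp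
  also have "\<dots> = (\<Sum>a\<in>{1..X m}. \<Sum>b\<in>{1..X m}-{a}.
      real (card {j\<in>{1..X (Suc m)}. E m w j = a}) * real (card {j\<in>{1..X (Suc m)}. E m w j = b})
      * indicator (separated n m a b) w)"
    using parent_in_range[OF assms(2,3)]
    by (intro sum_offdiag_comp_fibres) (auto simp: separated_def)
  also have "\<dots> = (\<Sum>a\<in>{1..X m}. \<Sum>b\<in>{1..X m}-{a}.
      real (outdeg E w X m a) * real (outdeg E w X m b) * indicator (separated n m a b) w)"
    by (intro sum.cong refl) (simp add: outdeg_def)
  finally show ?thesis .
qed

lemma expected_separated_Suc_self:
  assumes "enat (Suc m) < \<tau>"
  shows "expected_separated m (Suc m) = real (X (Suc m)) * (real (X (Suc m)) - 1) * (1 - coal_incr k X m)"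
proof -
  have "expected_separated m (Suc m)
      = (\<integral>w. (\<Sum>i\<in>{1..X (Suc m)}. \<Sum>j\<in>{1..X (Suc m)}-{i}. indicator (separated m (Suc m) i j) w) \<partial>M)"
    using assms by (intro expected_separated_eq_integral) simp_all
  also have "\<dots> = (\<integral>w. real (X (Suc m)) * (real (X (Suc m)) - 1) * (1 - coal_incr k X m) \<partial>M)"
  proof (intro Bochner_Integration.integral_cong refl)
    fix w assume w: "w \<in> space M"
    have "(\<Sum>i\<in>{1..X (Suc m)}. \<Sum>j\<in>{1..X (Suc m)}-{i}. indicator (separated m (Suc m) i j) w)
        = (\<Sum>a\<in>{1..X m}. \<Sum>b\<in>{1..X m}-{a}.
             real (outdeg E w X m a) * real (outdeg E w X m b) * indicator (separated m m a b) w)"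
      using assms w by (intro sum_offdiag_indicator_separated_Suc) simp_all
    also have "\<dots> = (\<Sum>a\<in>{1..X m}. \<Sum>b\<in>{1..X m}-{a}. real (outdeg E w X m a) * real (outdeg E w X m b))"
      using w by (intro sum.cong refl) (auto simp: separated_def indicator_def)
    finally show "(\<Sum>i\<in>{1..X (Suc m)}. \<Sum>j\<in>{1..X (Suc m)}-{i}. indicator (separated m (Suc m) i j) w)
        = real (X (Suc m)) * (real (X (Suc m)) - 1) * (1 - coal_incr k X m)"
      using sum_offdiag_outdeg[OF assms w] by simp
  qed
  finally show ?thesis by (simp add: prob_space)
qed

end

locale forward_neutral_genealogy = genealogy +
  assumes forward: "forward_neutral M \<tau> X E"
begin

lemma outdeg_measurable: "enat (Suc m) < \<tau> \<Longrightarrow> (\<lambda>w. outdeg E w X m) \<in> measurable M (count_space UNIV)"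
  using forward unfolding forward_neutral_def indep_rv_def by blast

lemma integrable_outdeg_pair:
  assumes "enat (Suc m) < \<tau>"
  shows "integrable M (\<lambda>w. real (outdeg E w X m a) * real (outdeg E w X m b))"
proof (rule integrable_const_bound[where B = "real (X (Suc m)) * real (X (Suc m))"])
  have "(\<lambda>w. outdeg E w X m x) \<in> measurable M (count_space UNIV)" for x
    using outdeg_measurable[OF assms] by (rule measurable_compose) simp
  then show "(\<lambda>w. real (outdeg E w X m a) * real (outdeg E w X m b)) \<in> borel_measurable M"
    by (intro borel_measurable_times; rule measurable_compose[of _ _ "count_space UNIV"]) simp_all
qed (auto intro!: mult_mono outdeg_le)

lemma integral_outdeg_pair_permute:
  assumes "enat (Suc m) < \<tau>" "\<sigma> permutes {1..X m}"
  shows "(\<integral>w. real (outdeg E w X m (\<sigma> a)) * real (outdeg E w X m (\<sigma> b)) \<partial>M)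
       = (\<integral>w. real (outdeg E w X m a) * real (outdeg E w X m b) \<partial>M)"
proof -
  define g where "g F = real (F a) * real (F b)" for F :: "nat \<Rightarrow> nat"
  have "(\<lambda>w. outdeg E w X m \<circ> \<sigma>) \<in> measurable M (count_space UNIV)"
    using outdeg_measurable[OF assms(1)] by (rule measurable_compose) simp
  then have "(\<integral>w. g (outdeg E w X m \<circ> \<sigma>) \<partial>M)
      = integral\<^sup>L (distr M (count_space UNIV) (\<lambda>w. outdeg E w X m \<circ> \<sigma>)) g"
    by (rule integral_distr[symmetric]) simp
  also have "\<dots> = integral\<^sup>L (distr M (count_space UNIV) (\<lambda>w. outdeg E w X m)) g"
    using forward assms unfolding forward_neutral_def by simp
  also have "\<dots> = (\<integral>w. g (outdeg E w X m) \<partial>M)"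
    using outdeg_measurable[OF assms(1)] by (intro integral_distr) simp_all
  finally show ?thesis unfolding g_def by simp
qed

lemma integral_outdeg_pair_mult_separated:
  assumes "n \<le> m" "enat (Suc m) < \<tau>"
  shows "(\<integral>w. real (outdeg E w X m a) * real (outdeg E w X m b) * indicator (separated n m a b) w \<partial>M)
       = (\<integral>w. real (outdeg E w X m a) * real (outdeg E w X m b) \<partial>M) * prob (separated n m a b)"
proof -
  define N where "N = PiM {..<m} (\<lambda>_. count_space (UNIV :: (nat \<Rightarrow> nat) set))"
  define Y where "Y w = (\<lambda>j\<in>{..<m}. E j w)" for w
  define T where "T = space N - {F \<in> space N. anc (\<lambda>j F. F j) F n (m - n) a = anc (\<lambda>j F. F j) F n (m - n) b}"
  have indep: "indep_rv M (count_space UNIV) (\<lambda>w. outdeg E w X m) N Y"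
    using forward assms unfolding forward_neutral_def N_def Y_def by blast
  have T: "T \<in> sets N"
    unfolding T_def N_def using assms(1)
    by (intro sets.Diff sets.top sets_Collect_eq_countable measurable_anc measurable_component_singleton) auto
  have "Y w \<in> space N" if "w \<in> space M" for w
    using indep that unfolding indep_rv_def by (auto intro: measurable_space)
  moreover have "anc (\<lambda>j F. F j) (Y w) n (m - n) x = anc E w n (m - n) x" for w x
    unfolding Y_def using assms(1) by (intro anc_restrict) simp
  ultimately have Y_T: "Y -` T \<inter> space M = separated n m a b"
    unfolding T_def separated_def by auto
  have "(\<lambda>w. real (outdeg E w X m a) * real (outdeg E w X m b)) ` space M \<subseteq> real ` {..X (Suc m) * X (Suc m)}"
    by (auto simp flip: of_nat_mult intro!: imageI mult_mono outdeg_le)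
  then have "finite ((\<lambda>w. real (outdeg E w X m a) * real (outdeg E w X m b)) ` space M)"
    by (rule finite_subset) simp
  then show ?thesis
    using indep_rv_integral_mult_indicator[OF indep T, of "\<lambda>F. real (F a) * real (F b)"] by (simp add: Y_T)
qed

lemma expected_separated_Suc_forward:
  assumes "n \<le> m" "enat (Suc m) < \<tau>"
  shows "expected_separated n (Suc m) = (\<Sum>a\<in>{1..X m}. \<Sum>b\<in>{1..X m}-{a}.
           (\<integral>w. real (outdeg E w X m a) * real (outdeg E w X m b) \<partial>M) * prob (separated n m a b))"
proof -
  have m: "enat m < \<tau>"
    using assms(2) by (rule enat_le_less_trans[rotated]) simp
  have "expected_separated n (Suc m)
      = (\<integral>w. (\<Sum>i\<in>{1..X (Suc m)}. \<Sum>j\<in>{1..X (Suc m)}-{i}. indicator (separated n (Suc m) i j) w) \<partial>M)"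
    using assms by (intro expected_separated_eq_integral) simp_all
  also have "\<dots> = (\<integral>w. (\<Sum>a\<in>{1..X m}. \<Sum>b\<in>{1..X m}-{a}.
      real (outdeg E w X m a) * real (outdeg E w X m b) * indicator (separated n m a b) w) \<partial>M)"
    using assms by (intro Bochner_Integration.integral_cong refl sum_offdiag_indicator_separated_Suc)
  also have "\<dots> = (\<Sum>a\<in>{1..X m}. \<Sum>b\<in>{1..X m}-{a}.
      \<integral>w. real (outdeg E w X m a) * real (outdeg E w X m b) * indicator (separated n m a b) w \<partial>M)"
    using assms m
    by (simp add: integrable_real_mult_indicator integrable_outdeg_pair separated_event
        del: sum_mult_indicator)
  finally show ?thesis
    using assms by (simp add: integral_outdeg_pair_mult_separated)
qed

lemma expected_separated_forward:
  assumes "n \<le> m" "enat m < \<tau>"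
  shows "expected_separated n m = real (X m) * (real (X m) - 1) * (\<Prod>j\<in>{n..<m}. 1 - coal_incr k X j)"
  using assms
proof (induction m rule: dec_induct)
  case base
  then show ?case by (simp add: expected_separated_refl)
next
  case (step m)
  let ?pair_moment = "\<lambda>a b. \<integral>w. real (outdeg E w X m a) * real (outdeg E w X m b) \<partial>M"
  obtain c where c: "\<forall>a\<in>{1..X m}. \<forall>b\<in>{1..X m}. a \<noteq> b \<longrightarrow> ?pair_moment a b = c"
    using permutes_invariant_offdiag_const[of "{1..X m}" ?pair_moment]
      integral_outdeg_pair_permute[OF step.prems] by blast
  have "c * real (X m) * (real (X m) - 1) = (\<Sum>a\<in>{1..X m}. \<Sum>b\<in>{1..X m}-{a}. ?pair_moment a b)"
    using sum_offdiag_const[of "{1..X m}" ?pair_moment c] c by simp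
  also have "\<dots> = (\<integral>w. (\<Sum>a\<in>{1..X m}. \<Sum>b\<in>{1..X m}-{a}.
                        real (outdeg E w X m a) * real (outdeg E w X m b)) \<partial>M)"
    using step.prems by (simp add: integrable_outdeg_pair)
  also have "\<dots> = (\<integral>w. real (X (Suc m)) * (real (X (Suc m)) - 1) * (1 - coal_incr k X m) \<partial>M)"
    using step.prems by (intro Bochner_Integration.integral_cong refl sum_offdiag_outdeg)
  also have "\<dots> = real (X (Suc m)) * (real (X (Suc m)) - 1) * (1 - coal_incr k X m)"
    by (simp add: prob_space)
  finally have c_eq: "c * real (X m) * (real (X m) - 1)
      = real (X (Suc m)) * (real (X (Suc m)) - 1) * (1 - coal_incr k X m)" .
  have "expected_separated n (Suc m)
      = (\<Sum>a\<in>{1..X m}. \<Sum>b\<in>{1..X m}-{a}. ?pair_moment a b * prob (separated n m a b))"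
    using step by (intro expected_separated_Suc_forward) simp_all
  also have "\<dots> = (\<Sum>a\<in>{1..X m}. \<Sum>b\<in>{1..X m}-{a}. c * prob (separated n m a b))"
    using c by (intro sum.cong refl) auto
  also have "\<dots> = c * expected_separated n m"
    by (simp add: expected_separated_def sum_distrib_left)
  also have "\<dots> = real (X (Suc m)) * (real (X (Suc m)) - 1) * (\<Prod>j\<in>{n..<Suc m}. 1 - coal_incr k X j)"
    using step c_eq by (simp add: enat_le_less_trans[of m "Suc m"] prod.atLeastLessThan_Suc mult_ac)
  finally show ?case .
qed

end

locale backward_neutral_genealogy = genealogy +
  assumes backward: "backward_neutral M \<tau> X E"
begin

lemma sibpart_indep_future:
  "enat (Suc n) < \<tau> \<Longrightarrow> indep_rv M (count_space UNIV) (\<lambda>w. sibpart E w X n)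
     (PiM {m. n < m \<and> enat (Suc m) < \<tau>} (\<lambda>_. count_space (UNIV :: (nat \<Rightarrow> nat) set)))
     (\<lambda>w. \<lambda>m\<in>{m. n < m \<and> enat (Suc m) < \<tau>}. E m w)"
  using backward unfolding backward_neutral_def by blast

lemma sibpart_measurable: "enat (Suc n) < \<tau> \<Longrightarrow> (\<lambda>w. sibpart E w X n) \<in> measurable M (count_space UNIV)"
  using sibpart_indep_future unfolding indep_rv_def by blast

lemma prob_separated_Suc_self_permute:
  assumes n: "enat (Suc n) < \<tau>" and \<sigma>: "\<sigma> permutes {1..X (Suc n)}"
    and ab: "a \<in> {1..X (Suc n)}" "b \<in> {1..X (Suc n)}"
  shows "prob (separated n (Suc n) (\<sigma> a) (\<sigma> b)) = prob (separated n (Suc n) a b)"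
proof -
  define \<Xi> where "\<Xi> w = sibpart E w X n" for w
  define apart where "apart x y = {P :: nat set set. \<forall>B\<in>P. x \<in> B \<longrightarrow> y \<notin> B}" for x y
  have sep: "separated n (Suc n) x y = \<Xi> -` apart x y \<inter> space M"
    if "x \<in> {1..X (Suc n)}" "y \<in> {1..X (Suc n)}" for x y
    using parent_eq_iff_siblings[OF n _ that] unfolding separated_Suc_self \<Xi>_def apart_def by auto
  have \<Xi>: "\<Xi> \<in> measurable M (count_space UNIV)"
    unfolding \<Xi>_def using n by (rule sibpart_measurable)
  then have \<sigma>\<Xi>: "(\<lambda>w. (\<lambda>B. \<sigma> ` B) ` \<Xi> w) \<in> measurable M (count_space UNIV)"
    by (rule measurable_compose) simp
  have "(\<lambda>w. (\<lambda>B. \<sigma> ` B) ` \<Xi> w) -` apart (\<sigma> a) (\<sigma> b) = \<Xi> -` apart a b"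
    using permutes_inj[OF \<sigma>] unfolding apart_def by (auto simp: inj_image_mem_iff)
  then have "prob (\<Xi> -` apart a b \<inter> space M)
      = measure (distr M (count_space UNIV) (\<lambda>w. (\<lambda>B. \<sigma> ` B) ` \<Xi> w)) (apart (\<sigma> a) (\<sigma> b))"
    using \<sigma>\<Xi> by (simp add: measure_distr)
  also have "\<dots> = measure (distr M (count_space UNIV) \<Xi>) (apart (\<sigma> a) (\<sigma> b))"
    using backward n \<sigma> unfolding backward_neutral_def \<Xi>_def by simp
  also have "\<dots> = prob (\<Xi> -` apart (\<sigma> a) (\<sigma> b) \<inter> space M)"
    using \<Xi> by (simp add: measure_distr)
  finally show ?thesis
    using ab permutes_in_image[OF \<sigma>] by (simp add: sep)
qed

lemma prob_separated_Suc_self: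
  assumes n: "enat (Suc n) < \<tau>" and ab: "a \<in> {1..X (Suc n)}" "b \<in> {1..X (Suc n)}" "a \<noteq> b"
  shows "prob (separated n (Suc n) a b) = 1 - coal_incr k X n"
proof -
  obtain c where c: "\<forall>a\<in>{1..X (Suc n)}. \<forall>b\<in>{1..X (Suc n)}. a \<noteq> b \<longrightarrow> prob (separated n (Suc n) a b) = c"
    using permutes_invariant_offdiag_const[of "{1..X (Suc n)}" "\<lambda>a b. prob (separated n (Suc n) a b)"]
      prob_separated_Suc_self_permute[OF n] by blast
  have "c * (real (X (Suc n)) * (real (X (Suc n)) - 1)) = expected_separated n (Suc n)"
    using sum_offdiag_const[of "{1..X (Suc n)}" _ c] c unfolding expected_separated_def by (simp add: mult_ac)
  also have "\<dots> = (1 - coal_incr k X n) * (real (X (Suc n)) * (real (X (Suc n)) - 1))"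
    using n by (simp add: expected_separated_Suc_self mult_ac)
  finally have "c = 1 - coal_incr k X n"
    using X_Suc_ge_2[OF n] by simp
  with c ab show ?thesis by blast
qed

lemma prob_ancestor_pair_Int_separated_Suc_self:
  assumes m: "enat (Suc n + d) < \<tau>" and ab: "a \<in> {1..X (Suc n)}" "b \<in> {1..X (Suc n)}" "a \<noteq> b"
  shows "prob ({w \<in> space M. anc E w (Suc n) d i = a \<and> anc E w (Suc n) d j = b} \<inter> separated n (Suc n) a b)
       = (1 - coal_incr k X n) * prob {w \<in> space M. anc E w (Suc n) d i = a \<and> anc E w (Suc n) d j = b}"
proof -
  have n: "enat (Suc n) < \<tau>"
    using m by (rule enat_le_less_trans[rotated]) simp
  define I where "I = {j. n < j \<and> enat (Suc j) < \<tau>}"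
  define N where "N = PiM I (\<lambda>_. count_space (UNIV :: (nat \<Rightarrow> nat) set))"
  define Y where "Y w = (\<lambda>j\<in>I. E j w)" for w
  have indep: "indep_rv M (count_space UNIV) (\<lambda>w. sibpart E w X n) N Y"
    unfolding N_def Y_def I_def using n by (rule sibpart_indep_future)
  have I: "j' \<in> I" if "Suc n \<le> j'" "j' < Suc n + d" for j'
    unfolding I_def using that m by (auto elim: enat_le_less_trans[rotated])
  define T where "T = {F \<in> space N. anc (\<lambda>j F. F j) F (Suc n) d i = a}
                    \<inter> {F \<in> space N. anc (\<lambda>j F. F j) F (Suc n) d j = b}"
  have T: "T \<in> sets N"
    unfolding T_def N_def using I
    by (intro sets.Int sets_Collect_eq_countable measurable_anc measurable_const measurable_component_singleton) auto
  have "anc (\<lambda>j F. F j) (Y w) (Suc n) d x = anc E w (Suc n) d x" for w x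
    unfolding Y_def using I by (intro anc_restrict) simp
  then have ancestors: "{w \<in> space M. anc E w (Suc n) d i = a \<and> anc E w (Suc n) d j = b} = Y -` T \<inter> space M"
    unfolding T_def using indep unfolding indep_rv_def by (auto intro: measurable_space)
  define apart where "apart = {P :: nat set set. \<forall>B\<in>P. a \<in> B \<longrightarrow> b \<notin> B}"
  have "separated n (Suc n) a b = (\<lambda>w. sibpart E w X n) -` apart \<inter> space M"
    using parent_eq_iff_siblings[OF n] ab unfolding separated_Suc_self apart_def by auto
  then show ?thesis
    using indep_rv_prob_Int[OF indep, of apart T] T prob_separated_Suc_self[OF n ab]
    unfolding ancestors by (simp add: Int_commute)
qed

lemma prob_separated_step:
  assumes nm: "Suc n \<le> m" and m: "enat m < \<tau>" and ij: "i \<in> {1..X m}" "j \<in> {1..X m}"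
  shows "prob (separated n m i j) = (1 - coal_incr k X n) * prob (separated (Suc n) m i j)"
proof -
  define d where "d = m - Suc n"
  have m': "enat (Suc n + d) < \<tau>"
    unfolding d_def using nm m by simp
  have n: "enat (Suc n) < \<tau>"
    using m' by (rule enat_le_less_trans[rotated]) simp
  let ?V = "{1..X (Suc n)}"
  let ?A = "\<lambda>x w. anc E w (Suc n) d x"
  let ?G = "\<lambda>a b. {w \<in> space M. ?A i w = a \<and> ?A j w = b}"
  have A_in: "?A x w \<in> ?V" if "w \<in> space M" "x \<in> {1..X m}" for x w
    using anc_in_range[OF m' that(1)] that(2) nm unfolding d_def by simp
  have G_event: "?G a b \<in> events" for a b
    using m' by (rule ancestor_pair_event)
  have "m - n = Suc d" "m - Suc n = d"
    unfolding d_def using nm by simp_all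
  then have separated_n: "separated n m i j
        = {w \<in> space M. ?A i w \<noteq> ?A j w \<and> w \<in> separated n (Suc n) (?A i w) (?A j w)}"
    and separated_Suc_n: "separated (Suc n) m i j = {w \<in> space M. ?A i w \<noteq> ?A j w \<and> w \<in> space M}"
    by (auto simp: separated_def)
  have "prob (separated n m i j) = (\<Sum>a\<in>?V. \<Sum>b\<in>?V-{a}. prob (?G a b \<inter> separated n (Suc n) a b))"
    unfolding separated_n using A_in ij G_event n by (intro prob_offdiag_pair_decompose separated_event) auto
  also have "\<dots> = (1 - coal_incr k X n) * (\<Sum>a\<in>?V. \<Sum>b\<in>?V-{a}. prob (?G a b \<inter> space M))"
    using m' by (simp add: prob_ancestor_pair_Int_separated_Suc_self sum_distrib_left Int_absorb2)
  also have "(\<Sum>a\<in>?V. \<Sum>b\<in>?V-{a}. prob (?G a b \<inter> space M)) = prob (separated (Suc n) m i j)"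
    unfolding separated_Suc_n using A_in ij G_event by (intro prob_offdiag_pair_decompose[symmetric]) auto
  finally show ?thesis .
qed

lemma expected_separated_backward:
  assumes "n \<le> m" "enat m < \<tau>"
  shows "expected_separated n m = real (X m) * (real (X m) - 1) * (\<Prod>j\<in>{n..<m}. 1 - coal_incr k X j)"
  using assms(1)
proof (induction n rule: inc_induct)
  case base
  then show ?case by (simp add: expected_separated_refl)
next
  case (step n)
  have "expected_separated n m = (1 - coal_incr k X n) * expected_separated (Suc n) m"
    unfolding expected_separated_def using step assms(2)
    by (simp add: prob_separated_step sum_distrib_left)
  also have "\<dots> = real (X m) * (real (X m) - 1) * (\<Prod>j\<in>{n..<m}. 1 - coal_incr k X j)"
    using step by (simp add: prod.atLeast_Suc_lessThan)
  finally show ?case .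
qed

end

locale neutral_genealogy = genealogy +
  assumes neutral: "forward_neutral M \<tau> X E \<or> backward_neutral M \<tau> X E"
begin

lemma expected_separated_eq_prod:
  assumes "n \<le> m" "enat m < \<tau>"
  shows "expected_separated n m = real (X m) * (real (X m) - 1) * (\<Prod>j\<in>{n..<m}. 1 - coal_incr k X j)"
  using neutral
proof
  assume "forward_neutral M \<tau> X E"
  then interpret forward_neutral_genealogy M \<tau> X k E
    by (intro forward_neutral_genealogy.intro genealogy_axioms forward_neutral_genealogy_axioms.intro)
  show ?thesis using assms by (rule expected_separated_forward)
next
  assume "backward_neutral M \<tau> X E"
  then interpret backward_neutral_genealogy M \<tau> X k E
    by (intro backward_neutral_genealogy.intro genealogy_axioms backward_neutral_genealogy_axioms.intro)
  show ?thesis using assms by (rule expected_separated_backward)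
qed

lemma coal_prob_eq_one_minus_prod:
  assumes "n < m" "enat m < \<tau>"
  shows "coal_prob M X E n m = 1 - (\<Prod>j\<in>{n..<m}. 1 - coal_incr k X j)"
proof -
  obtain m' where "m = Suc m'"
    using assms(1) by (cases m) auto
  then have "real (X m) * (real (X m) - 1) \<noteq> 0"
    using X_Suc_ge_2[of m'] assms(2) by simp
  then show ?thesis
    using assms by (simp add: coal_prob_eq_expected_separated expected_separated_eq_prod field_simps)
qed

lemma coal_prob_mono:
  assumes "n < m" "m \<le> m'" "enat m' < \<tau>"
  shows "coal_prob M X E n m \<le> coal_prob M X E n m'"
proof -
  have bounds: "0 \<le> coal_incr k X j \<and> coal_incr k X j \<le> 1" if "j < m'" for j
    using that assms(3) by (intro coal_incr_bounds[OF data]) (auto elim: enat_le_less_trans[rotated])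
  have "(\<Prod>j\<in>{n..<m'}. 1 - coal_incr k X j) \<le> (\<Prod>j\<in>{n..<m}. 1 - coal_incr k X j)"
    using assms(2) bounds by (rule prod_one_minus_antimono)
  moreover have "enat m < \<tau>"
    using assms(2,3) by (rule enat_le_less_trans)
  ultimately show ?thesis
    using assms by (simp add: coal_prob_eq_one_minus_prod)
qed

lemma coal_prob_tendsto_1_iff:
  assumes "\<tau> = \<infinity>"
  shows "(\<forall>n. (\<lambda>m. coal_prob M X E n m) \<longlonglongrightarrow> 1) \<longleftrightarrow> \<not> summable (coal_incr k X)"
proof -
  have "(\<lambda>m. coal_prob M X E n m) \<longlonglongrightarrow> 1 \<longleftrightarrow> (\<lambda>m. \<Prod>j\<in>{n..<m}. 1 - coal_incr k X j) \<longlonglongrightarrow> 0" for n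
  proof -
    have "eventually (\<lambda>m. coal_prob M X E n m = 1 - (\<Prod>j\<in>{n..<m}. 1 - coal_incr k X j)) sequentially"
      using assms by (intro eventually_sequentiallyI[of "Suc n"] coal_prob_eq_one_minus_prod) auto
    then show ?thesis
      by (simp add: tendsto_cong tendsto_one_minus_iff)
  qed
  moreover have "0 \<le> coal_incr k X j \<and> coal_incr k X j \<le> 1" for j
    using assms by (intro coal_incr_bounds[OF data]) simp
  ultimately show ?thesis
    by (simp add: prod_one_minus_tendsto_0_iff_not_summable)
qed

end

theorem lemma6p1:
  fixes M :: "'a measure" and \<tau> :: enat and X :: "nat \<Rightarrow> nat"
    and k :: "nat \<Rightarrow> nat \<Rightarrow> nat" and E :: "nat \<Rightarrow> 'a \<Rightarrow> nat \<Rightarrow> nat"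
  assumes "genealogy_data \<tau> X k"
    and "genealogy_model M \<tau> X k E"
    and "forward_neutral M \<tau> X E \<or> backward_neutral M \<tau> X E"
  shows "(\<forall>n m. n < m \<and> enat m < \<tau> \<longrightarrow>
            coal_prob M X E n m = 1 - (\<Prod>j\<in>{n..<m}. 1 - coal_incr k X j))
       \<and> (\<forall>n m m'. n < m \<and> m \<le> m' \<and> enat m' < \<tau> \<longrightarrow>
            coal_prob M X E n m \<le> coal_prob M X E n m')
       \<and> (\<tau> = \<infinity> \<and> (\<forall>j. coal_incr k X j < 1) \<longrightarrow>
            ((\<forall>n. (\<lambda>m. coal_prob M X E n m) \<longlonglongrightarrow> 1) \<longleftrightarrow> \<not> summable (coal_incr k X)))"
proof -
  interpret neutral_genealogy M \<tau> X k E
    using assms by (intro neutral_genealogy.intro genealogy.intro neutral_genealogy_axioms.intro)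
  show ?thesis
  proof (intro conjI allI impI)
    fix n m assume "n < m \<and> enat m < \<tau>"
    then show "coal_prob M X E n m = 1 - (\<Prod>j\<in>{n..<m}. 1 - coal_incr k X j)"
      by (intro coal_prob_eq_one_minus_prod) auto
  next
    fix n m m' assume "n < m \<and> m \<le> m' \<and> enat m' < \<tau>"
    then show "coal_prob M X E n m \<le> coal_prob M X E n m'"
      by (intro coal_prob_mono) auto
  next
    assume "\<tau> = \<infinity> \<and> (\<forall>j. coal_incr k X j < 1)"
    then show "(\<forall>n. (\<lambda>m. coal_prob M X E n m) \<longlonglongrightarrow> 1) \<longleftrightarrow> \<not> summable (coal_incr k X)"
      by (intro coal_prob_tendsto_1_iff) simp
  qed
qed

end
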